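(* Let $G$ be a finite abelian group and $q:G\to\mathbb Q/\mathbb Z$ a nondegenerate quadratic function. For any subgroup $A\subset G$, with $A^{\perp}=\{x\in G\mid b_q(x,A)=0\}$, $$\gamma(A,q|_A)=\gamma(G,q)\,\overline{\gamma(A^{\perp},q|_{A^{\perp}})},$$ where the bar denotes complex conjugation.
   Context: A quadratic function on a finite abelian group $G$ is a map $q:G\to\mathbb Q/\mathbb Z$ such that $b_q(x,y)=q(x+y)-q(x)-q(y)$ is $\mathbb Z$-bilinear. For a subgroup $H\subset G$, $H^{\perp}=\{x\in G\mid b_q(x,H)=0\}$; $q$ is nondegenerate if $G^{\perp}=0$. The normalized Gauss sum is $\gamma(G,q)=|G|^{-1/2}|G^{\perp}|^{-1/2}\sum_{x\in G}e^{2\pi i q(x)}$, where $|\cdot|$ denotes cardinality. For a restriction $q|_A$, the Gauss sum $\gamma(A,q|_A)$ is computed with $A$ in place of $G$ and $q|_A$ in place of $q$ (so the annihilator is taken inside $A$ with respect to $b_{q|_A}$). *)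

theory Defs
  imports Complex_Main
begin

text \<open>Values in Q/Z are represented by rational representatives; all notions below
  only depend on the classes modulo the integers.\<close>

definition bq :: "('a::ab_group_add \<Rightarrow> rat) \<Rightarrow> 'a \<Rightarrow> 'a \<Rightarrow> rat" where
  "bq q x y = q (x + y) - q x - q y"

definition quadratic_function :: "('a::ab_group_add \<Rightarrow> rat) \<Rightarrow> bool" where
  "quadratic_function q \<longleftrightarrow>
     (\<forall>x y z. bq q (x + y) z - bq q x z - bq q y z \<in> \<int>) \<and>
     (\<forall>x y z. bq q x (y + z) - bq q x y - bq q x z \<in> \<int>)"

definition orth :: "('a::ab_group_add \<Rightarrow> rat) \<Rightarrow> 'a set \<Rightarrow> 'a set \<Rightarrow> 'a set" where
  "orth q H S = {x \<in> H. \<forall>y\<in>S. bq q x y \<in> \<int>}"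

definition nondegenerate :: "('a::ab_group_add \<Rightarrow> rat) \<Rightarrow> bool" where
  "nondegenerate q \<longleftrightarrow> orth q UNIV UNIV = {0}"

definition add_subgroup :: "'a::ab_group_add set \<Rightarrow> bool" where
  "add_subgroup A \<longleftrightarrow> 0 \<in> A \<and> (\<forall>x\<in>A. \<forall>y\<in>A. x + y \<in> A) \<and> (\<forall>x\<in>A. - x \<in> A)"

definition gauss_sum :: "('a::ab_group_add \<Rightarrow> rat) \<Rightarrow> 'a set \<Rightarrow> complex" where
  "gauss_sum q H =
     (\<Sum>x\<in>H. cis (2 * pi * of_rat (q x))) /
     complex_of_real (sqrt (real (card H)) * sqrt (real (card (orth q H H))))"

end

theory Submission
  imports Defs "HOL-Library.Real_Mod"
begin

text \<open>Write B for the annihilator of A and e(r) for exp(2 \<pi> i r). Expanding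
  \<open>(\<Sum>x. e(q x)) \<cdot> conj (\<Sum>y\<in>B. e(q y))\<close> and substituting x = y + z gives
  \<open>\<Sum>z. e(q z) \<Sum>y\<in>B. e(b(y,z))\<close>; the inner character sum is |B| on the annihilator of B
  and 0 elsewhere. The same orthogonality, together with nondegeneracy, gives
  |A| |B| = |G| and that the annihilator of B is A again. Hence the raw sums satisfy
  S(G) conj S(B) = |B| S(A), and since the radicals of A and of B are both A \<inter> B,
  the normalisations agree.\<close>

definition exp_QZ :: "rat \<Rightarrow> complex" where
  "exp_QZ r = cis (2 * pi * of_rat r)"

lemma exp_QZ_add: "exp_QZ (r + s) = exp_QZ r * exp_QZ s"
  by (simp add: exp_QZ_def cis_mult of_rat_add distrib_left)

lemma exp_QZ_diff: "exp_QZ (r - s) = exp_QZ r * cnj (exp_QZ s)"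
  by (simp add: exp_QZ_def cis_cnj cis_mult of_rat_diff right_diff_distrib)

lemma exp_QZ_eq_1_iff: "exp_QZ r = 1 \<longleftrightarrow> r \<in> \<int>"
proof
  assume "exp_QZ r = 1"
  then obtain n :: int where "2 * pi * of_rat r = of_int n * (2 * pi)"
    by (auto simp: exp_QZ_def cis_eq_1_iff)
  then have "of_rat r = (of_rat (of_int n) :: real)"
    by simp
  then show "r \<in> \<int>"
    by (metis Ints_of_int of_rat_eq_iff)
qed (auto simp: exp_QZ_def elim!: Ints_cases)

lemma exp_QZ_Ints: "r \<in> \<int> \<Longrightarrow> exp_QZ r = 1"
  by (simp add: exp_QZ_eq_1_iff)

lemma add_subgroup_diff:
  "add_subgroup H \<Longrightarrow> x \<in> H \<Longrightarrow> y \<in> H \<Longrightarrow> x - y \<in> H"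
  unfolding add_subgroup_def by (metis diff_conv_add_uminus)

lemma sum_exp_QZ_hom_subgroup:
  fixes f :: "'a::ab_group_add \<Rightarrow> rat"
  assumes "finite H" and H: "add_subgroup H"
    and hom: "\<And>x y. x \<in> H \<Longrightarrow> y \<in> H \<Longrightarrow> f (x + y) - f x - f y \<in> \<int>"
  shows "(\<Sum>h\<in>H. exp_QZ (f h)) = (if \<forall>h\<in>H. f h \<in> \<int> then of_nat (card H) else 0)"
proof (cases "\<forall>h\<in>H. f h \<in> \<int>")
  case False
  then obtain h0 where h0: "h0 \<in> H" "f h0 \<notin> \<int>" by blast
  have shift: "exp_QZ (f (h0 + h)) = exp_QZ (f h0) * exp_QZ (f h)" if "h \<in> H" for h
  proof -
    have "f (h0 + h) = (f (h0 + h) - f h0 - f h) + f h0 + f h" by simp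
    then show ?thesis
      using hom[OF h0(1) that] by (metis exp_QZ_add exp_QZ_Ints mult_1)
  qed
  have "(\<Sum>h\<in>H. exp_QZ (f h)) = (\<Sum>h\<in>H. exp_QZ (f (h0 + h)))"
    using H h0(1) add_subgroup_diff[OF H] unfolding add_subgroup_def
    by (intro sum.reindex_bij_witness[where i="\<lambda>h. h0 + h" and j="\<lambda>h. h - h0"]) auto
  also have "\<dots> = exp_QZ (f h0) * (\<Sum>h\<in>H. exp_QZ (f h))"
    by (simp add: shift sum_distrib_left)
  finally have "(exp_QZ (f h0) - 1) * (\<Sum>h\<in>H. exp_QZ (f h)) = 0"
    by (simp add: algebra_simps)
  with h0(2) False show ?thesis
    by (auto simp: exp_QZ_eq_1_iff)
qed (simp add: exp_QZ_Ints)

lemma bq_commute: "bq q x y = bq q y x"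
  by (simp add: bq_def add.commute)

lemma bq_add_left: "quadratic_function q \<Longrightarrow> bq q (x + y) z - bq q x z - bq q y z \<in> \<int>"
  unfolding quadratic_function_def by blast

lemma bq_zero_left:
  assumes "quadratic_function q"
  shows "bq q 0 z \<in> \<int>"
proof -
  have "- (bq q (0 + 0) z - bq q 0 z - bq q 0 z) \<in> \<int>"
    using bq_add_left[OF assms] by (rule Ints_minus)
  then show ?thesis by simp
qed

lemma bq_minus_left:
  assumes "quadratic_function q"
  shows "bq q (- x) z + bq q x z \<in> \<int>"
proof -
  have "bq q 0 z - (bq q (- x + x) z - bq q (- x) z - bq q x z) \<in> \<int>"
    using bq_zero_left[OF assms] bq_add_left[OF assms] by (rule Ints_diff)
  then show ?thesis by simp
qed

lemma add_subgroup_orth: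
  assumes q: "quadratic_function q"
  shows "add_subgroup (orth q UNIV S)"
proof -
  have "bq q (x + y) z \<in> \<int>" if "bq q x z \<in> \<int>" "bq q y z \<in> \<int>" for x y z
    using Ints_add[OF Ints_add[OF bq_add_left[OF q, of x y z] that(1)] that(2)] by simp
  moreover have "bq q (- x) z \<in> \<int>" if "bq q x z \<in> \<int>" for x z
    using Ints_diff[OF bq_minus_left[OF q, of x z] that] by simp
  ultimately show ?thesis
    by (simp add: add_subgroup_def orth_def bq_zero_left[OF q])
qed

lemma orth_self_eq: "orth q H H = H \<inter> orth q UNIV H"
  by (auto simp: orth_def)

lemma sum_exp_QZ_bq:
  assumes "quadratic_function q" "finite H" "add_subgroup H"
  shows "(\<Sum>y\<in>H. exp_QZ (bq q y z)) = (if z \<in> orth q UNIV H then of_nat (card H) else 0)"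
proof -
  have "(\<forall>y\<in>H. bq q y z \<in> \<int>) \<longleftrightarrow> z \<in> orth q UNIV H"
    by (auto simp: orth_def bq_commute)
  then show ?thesis
    using sum_exp_QZ_hom_subgroup[OF assms(2,3), of "\<lambda>y. bq q y z"] bq_add_left[OF assms(1)] by simp
qed

lemma card_orth_mult_card:
  fixes q :: "'a::{ab_group_add, finite} \<Rightarrow> rat"
  assumes q: "quadratic_function q" and "nondegenerate q" and A: "add_subgroup A"
  shows "card (orth q UNIV A) * card A = card (UNIV :: 'a set)"
proof -
  have "of_nat (card (orth q UNIV A) * card A)
      = (\<Sum>x\<in>UNIV. \<Sum>a\<in>A. exp_QZ (bq q a x))"
    by (simp add: sum_exp_QZ_bq[OF q finite A] sum.If_cases)
  also have "\<dots> = (\<Sum>a\<in>A. \<Sum>x\<in>UNIV. exp_QZ (bq q x a))"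
    by (subst sum.swap) (simp add: bq_commute)
  also have "\<dots> = (\<Sum>a\<in>A. if a = 0 then of_nat (card (UNIV :: 'a set)) else 0)"
    using \<open>nondegenerate q\<close>
    by (simp add: sum_exp_QZ_bq[OF q finite] add_subgroup_def nondegenerate_def)
  also have "\<dots> = of_nat (card (UNIV :: 'a set))"
    using A by (simp add: add_subgroup_def)
  finally show ?thesis
    by (simp only: of_nat_eq_iff)
qed

lemma orth_orth:
  fixes q :: "'a::{ab_group_add, finite} \<Rightarrow> rat"
  assumes q: "quadratic_function q" and nd: "nondegenerate q" and A: "add_subgroup A"
  shows "orth q UNIV (orth q UNIV A) = A"
proof -
  let ?B = "orth q UNIV A"
  have B: "add_subgroup ?B"
    using add_subgroup_orth[OF q] .
  have "card ?B * card A = card (orth q UNIV ?B) * card ?B"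
    using card_orth_mult_card[OF q nd A] card_orth_mult_card[OF q nd B] by simp
  moreover have "card ?B > 0"
    using B by (auto simp: add_subgroup_def card_gt_0_iff)
  ultimately have "card A = card (orth q UNIV ?B)"
    by auto
  moreover have "A \<subseteq> orth q UNIV ?B"
    by (auto simp: orth_def bq_commute)
  ultimately show ?thesis
    by (metis card_subset_eq finite)
qed

lemma sum_exp_QZ_mult_cnj_subgroup:
  fixes q :: "'a::{ab_group_add, finite} \<Rightarrow> rat"
  assumes q: "quadratic_function q" and B: "add_subgroup B"
  shows "(\<Sum>x\<in>UNIV. exp_QZ (q x)) * cnj (\<Sum>y\<in>B. exp_QZ (q y))
       = of_nat (card B) * (\<Sum>z\<in>orth q UNIV B. exp_QZ (q z))"
proof -
  have "(\<Sum>x\<in>UNIV. exp_QZ (q x)) * cnj (\<Sum>y\<in>B. exp_QZ (q y))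
      = (\<Sum>y\<in>B. \<Sum>x\<in>UNIV. exp_QZ (q x - q y))"
    by (simp add: cnj_sum sum_distrib_left sum_distrib_right exp_QZ_diff)
  also have "\<dots> = (\<Sum>y\<in>B. \<Sum>z\<in>UNIV. exp_QZ (q (y + z) - q y))"
  proof (rule sum.cong[OF refl])
    fix y
    show "(\<Sum>x\<in>UNIV. exp_QZ (q x - q y)) = (\<Sum>z\<in>UNIV. exp_QZ (q (y + z) - q y))"
      using sum.reindex_bij_betw[OF bij_plus[of y], of "\<lambda>x. exp_QZ (q x - q y)"] by simp
  qed
  also have "\<dots> = (\<Sum>y\<in>B. \<Sum>z\<in>UNIV. exp_QZ (q z) * exp_QZ (bq q y z))"
    by (simp add: bq_def flip: exp_QZ_add)
  also have "\<dots> = (\<Sum>z\<in>UNIV. exp_QZ (q z) * (\<Sum>y\<in>B. exp_QZ (bq q y z)))"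
    by (subst sum.swap) (simp add: sum_distrib_left)
  also have "\<dots> = of_nat (card B) * (\<Sum>z\<in>orth q UNIV B. exp_QZ (q z))"
    by (simp add: sum_exp_QZ_bq[OF q finite B] sum_distrib_left if_distrib[of "times _"] sum.If_cases
        mult.commute)
  finally show ?thesis .
qed

lemma gauss_sum_eq:
  "gauss_sum q H = (\<Sum>x\<in>H. exp_QZ (q x)) / of_real (sqrt (real (card H * card (orth q H H))))"
  by (simp add: gauss_sum_def exp_QZ_def real_sqrt_mult)

theorem lemma1p2:
  fixes q :: "'a::{ab_group_add, finite} \<Rightarrow> rat"
    and A :: "'a set"
  assumes "quadratic_function q"
    and "nondegenerate q"
    and "add_subgroup A"
  shows "gauss_sum q A = gauss_sum q UNIV * cnj (gauss_sum q (orth q UNIV A))"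
proof -
  let ?B = "orth q UNIV A" and ?S = "\<lambda>H. \<Sum>x\<in>H. exp_QZ (q x)"
  have B: "add_subgroup ?B"
    using add_subgroup_orth[OF assms(1)] .
  have rad_A: "orth q A A = A \<inter> ?B" and rad_B: "orth q ?B ?B = A \<inter> ?B"
    using orth_orth[OF assms] by (auto simp: orth_self_eq)
  have rad_UNIV: "orth q UNIV UNIV = {0}"
    using assms(2) by (simp add: nondegenerate_def)
  have denominators: "sqrt (card (UNIV :: 'a set) * card (orth q UNIV UNIV)) * sqrt (card ?B * card (orth q ?B ?B))
      = card ?B * sqrt (card A * card (A \<inter> ?B))"
    by (simp add: rad_B rad_UNIV card_orth_mult_card[OF assms, symmetric] real_sqrt_mult)
  have "gauss_sum q UNIV * cnj (gauss_sum q ?B)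
      = ?S UNIV * cnj (?S ?B) / of_real (sqrt (card (UNIV :: 'a set) * card (orth q UNIV UNIV))
          * sqrt (card ?B * card (orth q ?B ?B)))"
    by (simp add: gauss_sum_eq)
  also have "\<dots> = ?S UNIV * cnj (?S ?B) / (of_nat (card ?B) * sqrt (card A * card (A \<inter> ?B)))"
    by (simp only: denominators of_real_mult of_real_of_nat_eq)
  also have "\<dots> = of_nat (card ?B) * ?S A / (of_nat (card ?B) * sqrt (card A * card (A \<inter> ?B)))"
    by (simp only: sum_exp_QZ_mult_cnj_subgroup[OF assms(1) B] orth_orth[OF assms])
  also have "\<dots> = gauss_sum q A"
    using card_gt_0_iff B by (simp add: add_subgroup_def gauss_sum_eq rad_A)
  finally show ?thesis ..
qed

end
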